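(* Let $S$ be a poset, $S\otimes_i G_i$ a terminating ordered join, and $\sigma\colon S\to S$ a weakly order-preserving involution. Suppose $G_i\simeq_1 G_{\sigma(i)}$ for all $i\in S$ and that the set $S^\sigma=\{i\in S:\sigma(i)=i\}$ of fixed points of $\sigma$ is a lower set of $S$. Then $S\otimes_i G_i\simeq_0 S^\sigma\otimes_i G_i$, where $S^\sigma$ carries the induced order and the right-hand side is the ordered join of the games $G_i$, $i\in S^\sigma$.
   Context: All games are impartial combinatorial games under normal play; a game is determined by its set of options, and $G \to G'$ means $G'$ is an option of $G$. A game is terminating if it admits no infinite sequence of moves. $\mathbf{0}$ denotes the game with no options. The Grundy number of a terminating game $G$ is the ordinal $\Gamma_0(G)=\operatorname{mex}\{\Gamma_0(G') : G\to G'\}$, where $\operatorname{mex}\Lambda$ is the least ordinal not in the set of ordinals $\Lambda$. The Grundy set is $\Gamma_1(G)=\{\Gamma_0(G') : G\to G'\}$. $G\simeq_0 H$ means $\Gamma_0(G)=\Gamma_0(H)$; $G\simeq_1 H$ means $\Gamma_1(G)=\Gamma_1(H)$. Ordered join: for a poset $S$ and a family $(G_i)_{i\in S}$ of games, $S \otimes_i G_i$ is the game whose options are exactly the ordered joins $S \otimes_i G'_i$ obtained by choosing one $i_0\in S$ and an option $G_{i_0}\to G'_{i_0}$, and setting $G'_i=\mathbf{0}$ for all $i>i_0$ and $G'_i=G_i$ for all other $i\ne i_0$. An involution $\sigma\colon S\to S$ (i.e. $\sigma\circ\sigma=\mathrm{id}$) is weakly order-preserving if for each $i\in S$ the set $\{j\in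 S : i<j \text{ or } \sigma(i)<j\}$ is mapped onto itself by $\sigma$. A lower set $L\subseteq S$ is a subset such that $j\in L$ and $i\le j$ imply $i\in L$. *)

theory Defs
  imports Main
begin

text \<open>Impartial games are represented by positions of a type 'p together with a move
relation mv (mv x y means y is an option of x).  Grundy values (ordinals) are taken in a
well-ordered type 'o.\<close>

definition mex :: "'o::wellorder set \<Rightarrow> 'o" where
  "mex A = (LEAST x. x \<notin> A)"

definition move_rel :: "('p \<Rightarrow> 'p \<Rightarrow> bool) \<Rightarrow> ('p \<times> 'p) set" where
  "move_rel mv = {(y, x). mv x y}"

definition terminating :: "('p \<Rightarrow> 'p \<Rightarrow> bool) \<Rightarrow> 'p \<Rightarrow> bool" where
  "terminating mv x \<longleftrightarrow> x \<in> Wellfounded.acc (move_rel mv)"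

definition grundy :: "('p \<Rightarrow> 'p \<Rightarrow> bool) \<Rightarrow> 'p \<Rightarrow> 'o::wellorder" where
  "grundy mv = wfrec {(y, x). (y, x) \<in> move_rel mv \<and> terminating mv x}
                     (\<lambda>g x. mex (g ` {y. mv x y}))"

definition grundy_set :: "('p \<Rightarrow> 'p \<Rightarrow> bool) \<Rightarrow> 'p \<Rightarrow> 'o::wellorder set" where
  "grundy_set mv x = grundy mv ` {y. mv x y}"

text \<open>Ordered join over S \<subseteq> 'i (induced order).  A position of the join is a family
'i \<Rightarrow> 'a option; None stands for the game 0, indices outside S are None.\<close>
definition join_pos :: "'i set \<Rightarrow> ('i \<Rightarrow> 'a) \<Rightarrow> ('i \<Rightarrow> 'a option)" where
  "join_pos S G = (\<lambda>i. if i \<in> S then Some (G i) else None)"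

definition join_move :: "('i::order) set \<Rightarrow> ('a \<Rightarrow> 'a \<Rightarrow> bool)
    \<Rightarrow> ('i \<Rightarrow> 'a option) \<Rightarrow> ('i \<Rightarrow> 'a option) \<Rightarrow> bool" where
  "join_move S mv f f' \<longleftrightarrow>
     (\<exists>i0\<in>S. \<exists>x y. f i0 = Some x \<and> mv x y \<and>
        f' = (\<lambda>i. if i = i0 then Some y else if i \<in> S \<and> i0 < i then None else f i))"

definition involution_on :: "'i set \<Rightarrow> ('i \<Rightarrow> 'i) \<Rightarrow> bool" where
  "involution_on S \<sigma> \<longleftrightarrow> (\<forall>i\<in>S. \<sigma> i \<in> S \<and> \<sigma> (\<sigma> i) = i)"

definition weakly_order_preserving :: "('i::order) set \<Rightarrow> ('i \<Rightarrow> 'i) \<Rightarrow> bool" where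
  "weakly_order_preserving S \<sigma> \<longleftrightarrow>
     (\<forall>i\<in>S. \<sigma> ` {j\<in>S. i < j \<or> \<sigma> i < j} = {j\<in>S. i < j \<or> \<sigma> i < j})"

definition lower_set :: "('i::order) set \<Rightarrow> 'i set \<Rightarrow> bool" where
  "lower_set S L \<longleftrightarrow> L \<subseteq> S \<and> (\<forall>j\<in>L. \<forall>i\<in>S. i \<le> j \<longrightarrow> i \<in> L)"

end

theory Submission
  imports Defs
begin

(* Call a position of the join balanced if every component j is \<simeq>\<^sub>1 to its mirror \<sigma> j, or
   \<simeq>\<^sub>0 to it with all components above j or \<sigma> j already 0; the initial position is
   balanced by hypothesis.  On balanced positions the join over S has the Grundy number of its
   restriction to the fixed points, by a mirror strategy: a move at a fixed point keeps the
   balance and is also a move of the restricted join, whereas a move at a non-fixed j can be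
   answered at j or \<sigma> j so that the balance is restored with the fixed points untouched, so it
   never attains the Grundy number of the restriction.  Weak order preservation makes the set
   of indices above j or \<sigma> j stable under \<sigma>, and as the fixed points form a lower set, that
   set contains no fixed point. *)

lemma mex_notin:
  fixes A :: "'o::wellorder set"
  assumes "A \<noteq> UNIV"
  shows "mex A \<notin> A"
proof -
  from assms obtain x where "x \<notin> A" by blast
  then show ?thesis unfolding mex_def by (rule LeastI)
qed

lemma mex_less: "(v::'o::wellorder) < mex A \<Longrightarrow> v \<in> A"
  unfolding mex_def using not_less_Least by blast

lemma mex_eqI:
  fixes w :: "'o::wellorder"
  assumes "w \<notin> A" and "\<And>v. v < w \<Longrightarrow> v \<in> A"
  shows "mex A = w"
  unfolding mex_def by (rule Least_equality) (use assms not_le in blast)+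

lemma image_not_UNIV_if_no_inj:
  assumes "\<not> (\<exists>g :: 'o \<Rightarrow> 'b. inj g)"
  shows "(f :: 'b \<Rightarrow> 'o) ` Y \<noteq> UNIV"
proof
  assume "f ` Y = UNIV"
  then have "inj (inv_into Y f)" using inj_on_inv_into[of UNIV f Y] by simp
  with assms show False by blast
qed

lemma no_inj_into_join_component:
  assumes "\<not> (\<exists>f :: 'o \<Rightarrow> ('i \<Rightarrow> 'a option). inj f)"
  shows "\<not> (\<exists>f :: 'o \<Rightarrow> 'a. inj f)"
proof
  assume "\<exists>f :: 'o \<Rightarrow> 'a. inj f"
  then obtain f :: "'o \<Rightarrow> 'a" where "inj f" by blast
  then have "inj (\<lambda>t. \<lambda>_::'i. Some (f t))" by (simp add: inj_def fun_eq_iff)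
  with assms show False by blast
qed

abbreviation terminating_moves :: "('p \<Rightarrow> 'p \<Rightarrow> bool) \<Rightarrow> ('p \<times> 'p) set" where
  "terminating_moves mv \<equiv> {(y, x). (y, x) \<in> move_rel mv \<and> terminating mv x}"

lemma wf_terminating_moves: "wf (terminating_moves mv)"
proof -
  let ?R = "terminating_moves mv"
  have "x \<in> Wellfounded.acc ?R" for x
  proof (cases "terminating mv x")
    case True
    then show ?thesis using acc_subset[of ?R "move_rel mv"] by (auto simp: terminating_def)
  next
    case False
    then show ?thesis by (auto intro: accI)
  qed
  then show ?thesis by (simp add: wf_iff_acc)
qed

lemma terminating_move: "terminating mv x \<Longrightarrow> mv x y \<Longrightarrow> terminating mv y"
  unfolding terminating_def move_rel_def by (erule acc_downward) simp

lemma terminating_if_trancl_terminating_moves: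
  assumes "(y, x) \<in> (terminating_moves mv)\<^sup>+"
  shows "terminating mv y"
  using assms by (induction rule: converse_trancl_induct) (auto simp: move_rel_def intro: terminating_move)

lemma grundy_mex:
  "terminating mv x \<Longrightarrow> (grundy mv x :: 'o::wellorder) = mex (grundy_set mv x)"
  unfolding grundy_def grundy_set_def
  by (subst wfrec[OF wf_terminating_moves]) (auto simp: cut_apply move_rel_def intro!: arg_cong[where f=mex])

lemma grundy_eqI:
  fixes w :: "'o::wellorder"
  assumes "terminating mv x"
    and "\<And>y. mv x y \<Longrightarrow> grundy mv y \<noteq> w"
    and "\<And>v. v < w \<Longrightarrow> \<exists>y. mv x y \<and> grundy mv y = v"
  shows "grundy mv x = w"
  unfolding grundy_mex[OF assms(1)] grundy_set_def
  by (rule mex_eqI) (use assms(2,3) in fastforce)+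

lemma grundy_less_option:
  "terminating mv x \<Longrightarrow> (v::'o::wellorder) < grundy mv x \<Longrightarrow> \<exists>y. mv x y \<and> grundy mv y = v"
  unfolding grundy_mex[where 'o='o] grundy_set_def by (auto dest: mex_less)

lemma grundy_option_neq:
  fixes mv :: "'p \<Rightarrow> 'p \<Rightarrow> bool"
  assumes "\<not> (\<exists>f :: 'o::wellorder \<Rightarrow> 'p. inj f)" and "terminating mv x" and "mv x y"
  shows "(grundy mv y :: 'o) \<noteq> grundy mv x"
proof
  assume "(grundy mv y :: 'o) = grundy mv x"
  moreover have "(grundy mv y :: 'o) \<in> grundy_set mv x"
    using assms(3) by (simp add: grundy_set_def)
  moreover have "mex (grundy_set mv x) \<notin> (grundy_set mv x :: 'o set)"
    unfolding grundy_set_def by (rule mex_notin[OF image_not_UNIV_if_no_inj[OF assms(1)]])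
  ultimately show False using grundy_mex[OF assms(2)] by metis
qed

definition join_update :: "('i::order) set \<Rightarrow> ('i \<Rightarrow> 'a option) \<Rightarrow> 'i \<Rightarrow> 'a \<Rightarrow> 'i \<Rightarrow> 'a option" where
  "join_update S p i0 y = (\<lambda>i. if i = i0 then Some y else if i \<in> S \<and> i0 < i then None else p i)"

definition join_restrict :: "'i set \<Rightarrow> ('i \<Rightarrow> 'a option) \<Rightarrow> 'i \<Rightarrow> 'a option" where
  "join_restrict L p = (\<lambda>i. if i \<in> L then p i else None)"

lemma join_move_iff:
  "join_move S mv p p' \<longleftrightarrow> (\<exists>i0\<in>S. \<exists>x y. p i0 = Some x \<and> mv x y \<and> p' = join_update S p i0 y)"
  by (simp add: join_move_def join_update_def)

lemma join_move_restrict_iff: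
  assumes "L \<subseteq> S"
  shows "join_move L mv (join_restrict L p) q \<longleftrightarrow>
    (\<exists>i0\<in>L. \<exists>x y. p i0 = Some x \<and> mv x y \<and> q = join_restrict L (join_update S p i0 y))"
proof -
  have "join_update L (join_restrict L p) i0 y = join_restrict L (join_update S p i0 y)"
    if "i0 \<in> L" for i0 y
    using that assms by (auto simp: join_restrict_def join_update_def fun_eq_iff)
  then show ?thesis by (auto simp: join_move_iff join_restrict_def)
qed

lemma terminating_join_component:
  assumes "terminating (join_move S mv) p" "j \<in> S" "p j = Some x"
  shows "terminating mv x"
  using assms(1)[unfolded terminating_def] assms(2,3)
proof (induction arbitrary: x rule: acc_induct_rule)
  case (1 p)
  show ?case unfolding terminating_def
  proof (rule accI)
    fix y assume "(y, x) \<in> move_rel mv"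
    then have "(join_update S p j y, p) \<in> move_rel (join_move S mv)"
      using 1 by (auto simp: move_rel_def join_move_iff)
    moreover have "join_update S p j y j = Some y" by (simp add: join_update_def)
    ultimately show "y \<in> Wellfounded.acc (move_rel mv)" using 1 by (auto simp: terminating_def)
  qed
qed

lemma terminating_join_restrict:
  assumes "L \<subseteq> S" "terminating (join_move S mv) p"
  shows "terminating (join_move L mv) (join_restrict L p)"
  using assms(2)[unfolded terminating_def] unfolding terminating_def
proof (induction rule: acc_induct_rule)
  case (1 p)
  show ?case
  proof (rule accI)
    fix q assume "(q, join_restrict L p) \<in> move_rel (join_move L mv)"
    then obtain i0 x y where "i0 \<in> L" "p i0 = Some x" "mv x y"
      and q: "q = join_restrict L (join_update S p i0 y)"
      by (auto simp: move_rel_def join_move_restrict_iff[OF assms(1)])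
    then have "(join_update S p i0 y, p) \<in> move_rel (join_move S mv)"
      using assms(1) by (auto simp: move_rel_def join_move_iff)
    with 1 q show "q \<in> Wellfounded.acc (move_rel (join_move L mv))" by blast
  qed
qed

definition grundy_set_opt :: "('a \<Rightarrow> 'a \<Rightarrow> bool) \<Rightarrow> 'a option \<Rightarrow> 'o::wellorder set" where
  "grundy_set_opt mv t = (case t of None \<Rightarrow> {} | Some x \<Rightarrow> grundy_set mv x)"

definition grundy_opt :: "('a \<Rightarrow> 'a \<Rightarrow> bool) \<Rightarrow> 'a option \<Rightarrow> 'o::wellorder" where
  "grundy_opt mv t = mex (grundy_set_opt mv t)"

lemma grundy_opt_Some: "terminating mv x \<Longrightarrow> (grundy_opt mv (Some x) :: 'o::wellorder) = grundy mv x"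
  by (simp add: grundy_opt_def grundy_set_opt_def grundy_mex)

definition strictly_above :: "('i::order) set \<Rightarrow> ('i \<Rightarrow> 'i) \<Rightarrow> 'i \<Rightarrow> 'i set" where
  "strictly_above S \<sigma> i = {j\<in>S. i < j \<or> \<sigma> i < j}"

definition balanced_at :: "'o::wellorder itself \<Rightarrow> ('i::order) set \<Rightarrow> ('i \<Rightarrow> 'i)
    \<Rightarrow> ('a \<Rightarrow> 'a \<Rightarrow> bool) \<Rightarrow> ('i \<Rightarrow> 'a option) \<Rightarrow> 'i \<Rightarrow> bool" where
  "balanced_at T S \<sigma> mv p j \<longleftrightarrow>
     (grundy_set_opt mv (p j) :: 'o set) = grundy_set_opt mv (p (\<sigma> j)) \<or>
     (grundy_opt mv (p j) :: 'o) = grundy_opt mv (p (\<sigma> j)) \<and>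
     (\<forall>k\<in>strictly_above S \<sigma> j. p k = None)"

definition balanced :: "'o::wellorder itself \<Rightarrow> ('i::order) set \<Rightarrow> ('i \<Rightarrow> 'i)
    \<Rightarrow> ('a \<Rightarrow> 'a \<Rightarrow> bool) \<Rightarrow> ('i \<Rightarrow> 'a option) \<Rightarrow> bool" where
  "balanced T S \<sigma> mv p \<longleftrightarrow> (\<forall>j\<in>S. balanced_at T S \<sigma> mv p j)"

lemma balanced_at_transfer:
  assumes "balanced_at T S \<sigma> mv p m" "p' m = p m" "p' (\<sigma> m) = p (\<sigma> m)"
    and "\<And>k. p k = None \<Longrightarrow> p' k = None"
  shows "balanced_at T S \<sigma> mv p' m"
  using assms unfolding balanced_at_def by auto

lemma balanced_at_eq: "p (\<sigma> m) = p m \<Longrightarrow> balanced_at T S \<sigma> mv p m"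
  by (simp add: balanced_at_def)

lemma balanced_at_None: "p m = None \<Longrightarrow> p (\<sigma> m) = None \<Longrightarrow> balanced_at T S \<sigma> mv p m"
  by (simp add: balanced_at_def grundy_set_opt_def)

locale join_symmetry =
  fixes S :: "'i::order set" and \<sigma> :: "'i \<Rightarrow> 'i"
  assumes involution: "involution_on S \<sigma>"
    and weakly_order_preserving: "weakly_order_preserving S \<sigma>"
    and fixed_points_lower: "lower_set S {i\<in>S. \<sigma> i = i}"
begin

abbreviation fixed_points :: "'i set" where
  "fixed_points \<equiv> {i\<in>S. \<sigma> i = i}"

lemma fixed_points_subset: "fixed_points \<subseteq> S"
  by blast

lemma sigma_in [simp]: "i \<in> S \<Longrightarrow> \<sigma> i \<in> S"
  using involution by (simp add: involution_on_def)

lemma sigma_sigma [simp]: "i \<in> S \<Longrightarrow> \<sigma> (\<sigma> i) = i"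
  using involution by (simp add: involution_on_def)

lemma strictly_above_sigma [simp]:
  "i \<in> S \<Longrightarrow> strictly_above S \<sigma> (\<sigma> i) = strictly_above S \<sigma> i"
  by (auto simp: strictly_above_def)

lemma sigma_strictly_above_iff:
  "i \<in> S \<Longrightarrow> k \<in> S \<Longrightarrow> \<sigma> k \<in> strictly_above S \<sigma> i \<longleftrightarrow> k \<in> strictly_above S \<sigma> i"
  using weakly_order_preserving unfolding weakly_order_preserving_def strictly_above_def[symmetric]
  by (metis (no_types, lifting) image_iff sigma_sigma)

lemma sigma_incomparable:
  assumes "j \<in> S"
  shows "\<not> j < \<sigma> j" and "\<not> \<sigma> j < j"
  using sigma_strictly_above_iff[OF assms assms] assms by (auto simp: strictly_above_def)

lemma strictly_above_not_fixed:
  assumes "j \<in> S" "\<sigma> j \<noteq> j" "k \<in> strictly_above S \<sigma> j"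
  shows "\<sigma> k \<noteq> k"
proof
  assume "\<sigma> k = k"
  then have below_fixed: "\<sigma> i = i" if "i \<in> S" "i \<le> k" for i
    using fixed_points_lower assms(3) that by (auto simp: lower_set_def strictly_above_def)
  from assms(3) have "j \<le> k \<or> \<sigma> j \<le> k" by (auto simp: strictly_above_def)
  then show False using below_fixed[of j] below_fixed[of "\<sigma> j"] assms(1,2) by auto
qed

lemma balanced_update_fixed:
  assumes bal: "balanced T S \<sigma> mv p" and i0: "i0 \<in> S" "\<sigma> i0 = i0" "p i0 = Some x"
  shows "balanced T S \<sigma> mv (join_update S p i0 y)"
  unfolding balanced_def
proof
  fix m assume m: "m \<in> S"
  let ?p' = "join_update S p i0 y"
  have "strictly_above S \<sigma> i0 = {k\<in>S. i0 < k}"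
    using i0(2) by (auto simp: strictly_above_def)
  then have above_iff: "i0 < \<sigma> m \<longleftrightarrow> i0 < m"
    using sigma_strictly_above_iff[OF i0(1) m] m by simp
  have sigma_eq_iff: "\<sigma> m = i0 \<longleftrightarrow> m = i0"
    using m i0 by (metis sigma_sigma)
  show "balanced_at T S \<sigma> mv ?p' m"
  proof (cases "m = i0")
    case True
    then show ?thesis using i0(2) by (simp add: balanced_at_eq)
  next
    case False
    then have "\<sigma> m \<noteq> i0" using sigma_eq_iff by blast
    show ?thesis
    proof (cases "i0 < m")
      case True
      then have "?p' m = None" "?p' (\<sigma> m) = None"
        using \<open>m \<noteq> i0\<close> \<open>\<sigma> m \<noteq> i0\<close> above_iff m by (simp_all add: join_update_def)
      then show ?thesis by (rule balanced_at_None)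
    next
      case False
      then have "?p' m = p m" "?p' (\<sigma> m) = p (\<sigma> m)"
        using \<open>m \<noteq> i0\<close> \<open>\<sigma> m \<noteq> i0\<close> above_iff by (simp_all add: join_update_def)
      moreover have "?p' k = None" if "p k = None" for k
        using that i0(3) by (auto simp: join_update_def)
      moreover have "balanced_at T S \<sigma> mv p m" using bal m by (simp add: balanced_def)
      ultimately show ?thesis by (blast intro: balanced_at_transfer)
    qed
  qed
qed

lemma balanced_reply:
  assumes bal: "balanced TYPE('o::wellorder) S \<sigma> mv p" and j: "j \<in> S" "\<sigma> j \<noteq> j" "p j = Some x"
    and i: "i = j \<or> i = \<sigma> j" "p i \<noteq> None"
    and vanish: "i = \<sigma> j \<or> (\<forall>k\<in>strictly_above S \<sigma> j. p k = None)"
    and p'': "p'' = join_update S (join_update S p j y) i z"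
    and eq: "(grundy_opt mv (p'' j) :: 'o) = grundy_opt mv (p'' (\<sigma> j))"
  shows "join_restrict fixed_points p'' = join_restrict fixed_points p"
    and "balanced TYPE('o) S \<sigma> mv p''"
proof -
  let ?A = "strictly_above S \<sigma> j"
  have incomp: "\<not> j < \<sigma> j" "\<not> \<sigma> j < j" using sigma_incomparable j(1) by auto
  have zero: "p'' k = None" if "k \<in> ?A" for k
    using that i vanish incomp unfolding p'' by (auto simp: join_update_def strictly_above_def)
  have same: "p'' k = p k" if "k \<notin> ?A" "k \<noteq> j" "k \<noteq> \<sigma> j" for k
    using that i unfolding p'' by (auto simp: join_update_def strictly_above_def)
  have none: "p'' k = None" if "p k = None" for k
    using that j(3) i unfolding p'' by (auto simp: join_update_def)
  have fixed_untouched: "p'' k = p k" if "k \<in> S" "\<sigma> k = k" for k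
  proof -
    have "k \<noteq> j" using that j(2) by auto
    moreover have "k \<noteq> \<sigma> j" using that j(1,2) by (metis sigma_sigma)
    moreover have "k \<notin> ?A" using strictly_above_not_fixed[OF j(1,2)] that by blast
    ultimately show ?thesis using same by blast
  qed
  then show "join_restrict fixed_points p'' = join_restrict fixed_points p"
    by (auto simp: join_restrict_def fun_eq_iff)
  show "balanced TYPE('o) S \<sigma> mv p''"
    unfolding balanced_def
  proof
    fix m assume m: "m \<in> S"
    consider "m = j" | "m = \<sigma> j" | "m \<in> ?A" | "m \<notin> ?A" "m \<noteq> j" "m \<noteq> \<sigma> j" by blast
    then show "balanced_at TYPE('o) S \<sigma> mv p'' m"
    proof cases
      case 1
      then show ?thesis unfolding balanced_at_def using eq zero by blast
    next
      case 2
      then show ?thesis unfolding balanced_at_def using eq zero j(1) by simp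
    next
      case 3
      then show ?thesis
        using zero sigma_strictly_above_iff[OF j(1) m] m by (simp add: balanced_at_None)
    next
      case 4
      have "\<sigma> m \<notin> ?A" using 4(1) sigma_strictly_above_iff[OF j(1) m] by simp
      moreover have "\<sigma> m \<noteq> j" "\<sigma> m \<noteq> \<sigma> j" using 4(2,3) m j(1) by (metis sigma_sigma)+
      ultimately have "p'' (\<sigma> m) = p (\<sigma> m)" by (rule same)
      moreover have "p'' m = p m" using 4 by (rule same)
      moreover have "balanced_at TYPE('o) S \<sigma> mv p m" using bal m by (simp add: balanced_def)
      ultimately show ?thesis using none by (blast intro: balanced_at_transfer)
    qed
  qed
qed

lemma reply_at_mirror:
  fixes mv :: "'a \<Rightarrow> 'a \<Rightarrow> bool"
  assumes bal: "balanced TYPE('o::wellorder) S \<sigma> mv p" and termin: "terminating (join_move S mv) p"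
    and j: "j \<in> S" "\<sigma> j \<noteq> j" "p j = Some x" and xy: "mv x y"
    and mirror: "(grundy mv y :: 'o) \<in> grundy_set_opt mv (p (\<sigma> j))"
  obtains p'' where "join_move S mv (join_update S p j y) p''"
    and "join_restrict fixed_points p'' = join_restrict fixed_points p"
    and "balanced TYPE('o) S \<sigma> mv p''"
proof -
  have incomp: "\<not> j < \<sigma> j" "\<not> \<sigma> j < j" using sigma_incomparable j(1) by auto
  obtain x' z where x': "p (\<sigma> j) = Some x'" and z: "mv x' z" "(grundy mv z :: 'o) = grundy mv y"
    using mirror by (cases "p (\<sigma> j)") (auto simp: grundy_set_opt_def grundy_set_def)
  have ty: "terminating mv y" using terminating_join_component[OF termin j(1,3)] xy
    by (rule terminating_move)
  have tz: "terminating mv z" using terminating_join_component[OF termin sigma_in[OF j(1)] x'] z(1)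
    by (rule terminating_move)
  define p'' where "p'' = join_update S (join_update S p j y) (\<sigma> j) z"
  have "join_move S mv (join_update S p j y) p''"
    unfolding join_move_iff p''_def using j(1,2) x' z(1) incomp
    by (intro bexI[of _ "\<sigma> j"]) (auto simp: join_update_def)
  moreover have "(grundy_opt mv (p'' j) :: 'o) = grundy_opt mv (p'' (\<sigma> j))"
    using j(2) incomp z(2) grundy_opt_Some[OF ty, where 'o='o] grundy_opt_Some[OF tz, where 'o='o]
    by (simp add: p''_def join_update_def)
  ultimately show thesis
    using balanced_reply[OF bal j _ _ _ p''_def] x' that by simp
qed

lemma reply_at_self:
  fixes mv :: "'a \<Rightarrow> 'a \<Rightarrow> bool"
  assumes bal: "balanced TYPE('o::wellorder) S \<sigma> mv p" and termin: "terminating (join_move S mv) p"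
    and j: "j \<in> S" "\<sigma> j \<noteq> j" "p j = Some x" and xy: "mv x y"
    and vanish: "\<forall>k\<in>strictly_above S \<sigma> j. p k = None"
    and y': "mv y y'" "(grundy mv y' :: 'o) = grundy_opt mv (p (\<sigma> j))"
  obtains p'' where "join_move S mv (join_update S p j y) p''"
    and "join_restrict fixed_points p'' = join_restrict fixed_points p"
    and "balanced TYPE('o) S \<sigma> mv p''"
proof -
  have incomp: "\<not> j < \<sigma> j" "\<not> \<sigma> j < j" using sigma_incomparable j(1) by auto
  have "terminating mv y'"
    using terminating_move[OF terminating_move[OF terminating_join_component[OF termin j(1,3)] xy] y'(1)] .
  define p'' where "p'' = join_update S (join_update S p j y) j y'"
  have "join_move S mv (join_update S p j y) p''"
    unfolding join_move_iff p''_def using j(1) y'(1) by (auto simp: join_update_def)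
  moreover have "(grundy_opt mv (p'' j) :: 'o) = grundy_opt mv (p'' (\<sigma> j))"
    using j(2) incomp y'(2) grundy_opt_Some[OF \<open>terminating mv y'\<close>, where 'o='o]
    by (simp add: p''_def join_update_def)
  ultimately show thesis
    using balanced_reply[OF bal j _ _ _ p''_def] j(3) vanish that by simp
qed

lemma mirror_reply:
  fixes mv :: "'a \<Rightarrow> 'a \<Rightarrow> bool"
  assumes no_inj: "\<not> (\<exists>f :: 'o::wellorder \<Rightarrow> 'a. inj f)"
    and bal: "balanced TYPE('o) S \<sigma> mv p" and termin: "terminating (join_move S mv) p"
    and j: "j \<in> S" "\<sigma> j \<noteq> j" "p j = Some x" and xy: "mv x y"
  obtains p'' where "join_move S mv (join_update S p j y) p''"
    and "join_restrict fixed_points p'' = join_restrict fixed_points p"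
    and "balanced TYPE('o) S \<sigma> mv p''"
proof -
  have tx: "terminating mv x" using terminating_join_component[OF termin j(1,3)] .
  have ty: "terminating mv y" using terminating_move[OF tx xy] .
  have gy: "(grundy mv y :: 'o) \<in> grundy_set mv x" using xy by (simp add: grundy_set_def)
  have "balanced_at TYPE('o) S \<sigma> mv p j" using bal j(1) by (simp add: balanced_def)
  then consider "grundy_set_opt mv (p (\<sigma> j)) = (grundy_set mv x :: 'o set)"
    | "grundy_opt mv (p (\<sigma> j)) = (grundy mv x :: 'o)" "\<forall>k\<in>strictly_above S \<sigma> j. p k = None"
    unfolding balanced_at_def using grundy_opt_Some[where 'o='o, OF tx] j(3)
    by (auto simp: grundy_set_opt_def)
  then show thesis
  proof cases
    case 1
    then have "(grundy mv y :: 'o) \<in> grundy_set_opt mv (p (\<sigma> j))" using gy by simp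
    then show thesis by (rule reply_at_mirror[OF bal termin j xy _ that])
  next
    case 2
    show thesis
    proof (cases "(grundy mv y :: 'o) < grundy mv x")
      case True
      then have "(grundy mv y :: 'o) \<in> grundy_set_opt mv (p (\<sigma> j))"
        using 2(1) by (simp add: grundy_opt_def mex_less)
      then show thesis by (rule reply_at_mirror[OF bal termin j xy _ that])
    next
      case False
      \<comment> \<open>The value went up, so the mover can restore the old value at j itself.\<close>
      then have "(grundy mv x :: 'o) < grundy mv y"
        using grundy_option_neq[OF no_inj tx xy] by auto
      then obtain y' where y': "mv y y'" "(grundy mv y' :: 'o) = grundy_opt mv (p (\<sigma> j))"
        using grundy_less_option[OF ty] 2(1) by auto
      show thesis by (rule reply_at_self[OF bal termin j xy 2(2) y' that])
    qed
  qed
qed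

lemma grundy_option_neq_restrict:
  fixes mv :: "'a \<Rightarrow> 'a \<Rightarrow> bool"
  assumes no_inj: "\<not> (\<exists>f :: 'o::wellorder \<Rightarrow> ('i \<Rightarrow> 'a option). inj f)"
    and termin: "terminating (join_move S mv) p" and bal: "balanced TYPE('o) S \<sigma> mv p"
    and IH: "\<And>p'. (p', p) \<in> (terminating_moves (join_move S mv))\<^sup>+ \<Longrightarrow>
      balanced TYPE('o) S \<sigma> mv p' \<Longrightarrow>
      (grundy (join_move S mv) p' :: 'o) = grundy (join_move fixed_points mv) (join_restrict fixed_points p')"
    and move: "join_move S mv p p'"
  shows "(grundy (join_move S mv) p' :: 'o) \<noteq> grundy (join_move fixed_points mv) (join_restrict fixed_points p)"
proof -
  let ?JS = "join_move S mv" and ?JF = "join_move fixed_points mv"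
  have p'_term: "terminating ?JS p'" using terminating_move[of ?JS, OF termin move] .
  have step: "(p', p) \<in> terminating_moves ?JS" using move termin by (simp add: move_rel_def)
  from move obtain i0 x y where i0: "i0 \<in> S" "p i0 = Some x" "mv x y"
    and p': "p' = join_update S p i0 y" by (auto simp: join_move_iff)
  show ?thesis
  proof (cases "\<sigma> i0 = i0")
    case True
    then have "balanced TYPE('o) S \<sigma> mv p'" using balanced_update_fixed[OF bal] i0 p' by blast
    then have "(grundy ?JS p' :: 'o) = grundy ?JF (join_restrict fixed_points p')"
      using IH step by blast
    moreover have "?JF (join_restrict fixed_points p) (join_restrict fixed_points p')"
      using i0 p' True by (auto simp: join_move_restrict_iff[OF fixed_points_subset])
    then have "(grundy ?JF (join_restrict fixed_points p') :: 'o) \<noteq> grundy ?JF (join_restrict fixed_points p)"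
      by (rule grundy_option_neq[OF no_inj terminating_join_restrict[OF fixed_points_subset termin]])
    ultimately show ?thesis by simp
  next
    case False
    obtain p'' where reply: "?JS p' p''" "join_restrict fixed_points p'' = join_restrict fixed_points p"
      "balanced TYPE('o) S \<sigma> mv p''"
      unfolding p'
      by (rule mirror_reply[OF no_inj_into_join_component[OF no_inj] bal termin i0(1) False i0(2,3)])
    have "(p'', p') \<in> terminating_moves ?JS" using reply(1) p'_term by (simp add: move_rel_def)
    then have "(p'', p) \<in> (terminating_moves ?JS)\<^sup>+"
      using step by (rule trancl_into_trancl2[OF _ r_into_trancl])
    then have "(grundy ?JS p'' :: 'o) = grundy ?JF (join_restrict fixed_points p)"
      using IH reply(2,3) by simp
    then show ?thesis using grundy_option_neq[where mv = ?JS, OF no_inj p'_term reply(1)] by simp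
  qed
qed

lemma grundy_restrict_less_option:
  fixes mv :: "'a \<Rightarrow> 'a \<Rightarrow> bool"
  assumes termin: "terminating (join_move S mv) p" and bal: "balanced TYPE('o::wellorder) S \<sigma> mv p"
    and IH: "\<And>p'. (p', p) \<in> (terminating_moves (join_move S mv))\<^sup>+ \<Longrightarrow>
      balanced TYPE('o) S \<sigma> mv p' \<Longrightarrow>
      (grundy (join_move S mv) p' :: 'o) = grundy (join_move fixed_points mv) (join_restrict fixed_points p')"
    and less: "v < (grundy (join_move fixed_points mv) (join_restrict fixed_points p) :: 'o)"
  shows "\<exists>p'. join_move S mv p p' \<and> grundy (join_move S mv) p' = v"
proof -
  let ?JS = "join_move S mv" and ?JF = "join_move fixed_points mv"
  obtain q where "?JF (join_restrict fixed_points p) q" "grundy ?JF q = v"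
    using grundy_less_option[OF terminating_join_restrict[OF fixed_points_subset termin] less] by blast
  then obtain i0 x y where i0: "i0 \<in> fixed_points" "p i0 = Some x" "mv x y"
    and q: "q = join_restrict fixed_points (join_update S p i0 y)"
    by (auto simp: join_move_restrict_iff[OF fixed_points_subset])
  have move: "?JS p (join_update S p i0 y)" using i0 by (auto simp: join_move_iff)
  then have "(join_update S p i0 y, p) \<in> (terminating_moves ?JS)\<^sup>+"
    using termin by (simp add: move_rel_def r_into_trancl')
  moreover have "balanced TYPE('o) S \<sigma> mv (join_update S p i0 y)"
    using balanced_update_fixed[OF bal] i0 by blast
  ultimately have "(grundy ?JS (join_update S p i0 y) :: 'o) = v"
    using IH \<open>grundy ?JF q = v\<close> q by simp
  with move show ?thesis by blast
qed

lemma grundy_join_balanced: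
  fixes mv :: "'a \<Rightarrow> 'a \<Rightarrow> bool"
  assumes no_inj: "\<not> (\<exists>f :: 'o::wellorder \<Rightarrow> ('i \<Rightarrow> 'a option). inj f)"
    and "terminating (join_move S mv) p" and "balanced TYPE('o) S \<sigma> mv p"
  shows "(grundy (join_move S mv) p :: 'o)
       = grundy (join_move fixed_points mv) (join_restrict fixed_points p)"
  using wf_trancl[OF wf_terminating_moves[of "join_move S mv"]] assms(2,3)
proof (induction p rule: wf_induct_rule)
  case (less p)
  have IH: "(grundy (join_move S mv) p' :: 'o) = grundy (join_move fixed_points mv) (join_restrict fixed_points p')"
    if "(p', p) \<in> (terminating_moves (join_move S mv))\<^sup>+" "balanced TYPE('o) S \<sigma> mv p'" for p'
    using less.IH[OF that(1) terminating_if_trancl_terminating_moves[OF that(1)] that(2)] .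
  show ?case
    using grundy_option_neq_restrict[OF no_inj less.prems IH] grundy_restrict_less_option[OF less.prems IH]
    by (intro grundy_eqI[OF less.prems(1)]) blast+
qed

end

theorem mainTheorem9:
  fixes S :: "'i::order set" and G :: "'i \<Rightarrow> 'a" and mv :: "'a \<Rightarrow> 'a \<Rightarrow> bool"
    and \<sigma> :: "'i \<Rightarrow> 'i"
  assumes big: "\<not> (\<exists>f :: 'o::wellorder \<Rightarrow> ('i \<Rightarrow> 'a option). inj f)"
    and termin: "terminating (join_move S mv) (join_pos S G)"
    and inv: "involution_on S \<sigma>"
    and wop: "weakly_order_preserving S \<sigma>"
    and sim1: "\<forall>i\<in>S. (grundy_set mv (G i) :: 'o set) = grundy_set mv (G (\<sigma> i))"
    and low: "lower_set S {i\<in>S. \<sigma> i = i}"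
  shows "(grundy (join_move S mv) (join_pos S G) :: 'o)
       = grundy (join_move {i\<in>S. \<sigma> i = i} mv) (join_pos {i\<in>S. \<sigma> i = i} G)"
proof -
  interpret join_symmetry S \<sigma> using inv wop low by unfold_locales
  have "balanced_at TYPE('o) S \<sigma> mv (join_pos S G) j" if "j \<in> S" for j
    using sim1[rule_format, OF that] that
    unfolding balanced_at_def by (simp add: grundy_set_opt_def join_pos_def)
  then have "balanced TYPE('o) S \<sigma> mv (join_pos S G)" by (simp add: balanced_def)
  moreover have "join_restrict {i\<in>S. \<sigma> i = i} (join_pos S G) = join_pos {i\<in>S. \<sigma> i = i} G"
    by (auto simp: join_restrict_def join_pos_def fun_eq_iff)
  ultimately show ?thesis using grundy_join_balanced[OF big termin] by simp
qed

end
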